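(* For $i=1,2$ let $C_i=C_{i+}\oplus C_{i-}$ with $C_{i\pm}=\mathbb{Z}_D^n$, let $P_i=\begin{bmatrix}I_n&0\\0&-I_n\end{bmatrix}$, and let $\delta_i$ be boundary operators on $C_i$ compatible with $P_i$. Let $C=C_1\otimes C_2$, $\partial=\delta_1\otimes I+P_1\otimes\delta_2$, and $C_+=C_{1+}\otimes C_{2+}\oplus C_{1-}\otimes C_{2-}\le C$. Fix $n'\le n$ and suppose that the distance of each of the codes $\mathrm{CSS}(C_i,\delta_i,P_i)$ and $\mathrm{CSS}(C_i,\delta_i,-P_i)$ is at least $2(n-n')+1$ ($i=1,2$). If $h\in C_+\cap\ker\partial$ has vanishing reduced matrix, then $h\in\operatorname{im}\partial$. Likewise, if $h\in C_+\cap\ker\partial^T$ has vanishing reduced matrix, then $h\in\operatorname{im}\partial^T$.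
   Context: $D$ is an odd prime, $\mathbb{Z}_D$ the field with $D$ elements; transposes are with respect to the standard (product) bases. A boundary operator compatible with $P$ on $C_+\oplus C_-$ is a linear map $\delta$ with $\delta^2=0$, $\delta P+P\delta=0$, i.e. $\delta=\begin{bmatrix}0&\delta_{+-}\\ \delta_{-+}&0\end{bmatrix}$ with $\delta_{+-}:C_-\to C_+$, $\delta_{-+}:C_+\to C_-$. The code $\mathrm{CSS}(C,\delta,P)$ is the qudit CSS code over $\mathbb{Z}_D$ whose physical qudits correspond to the standard basis vectors of $C_+$, whose $Z$-type stabilizer generators are the columns of $\delta_{+-}$ and whose $X$-type stabilizer generators are the rows of $\delta_{-+}$; its distance is the minimum weight (number of nonzero coordinates) of a vector in $(\ker\delta_{-+}\setminus\operatorname{im}\delta_{+-})\cup(\ker\delta_{+-}^T\setminus\operatorname{im}\delta_{-+}^T)$. $\mathrm{CSS}(C,\delta,-P)$ is the same construction with the roles of $C_+$ and $C_-$ (and of $\delta_{+-}$, $\delta_{-+}$) exchanged. An element $\psi\in C_+$ is viewed as a pair of $n\times n$ matrices $\psi_+\in C_{1+}\otimes C_{2+}$, $\psi_-\in C_{1-}\otimes C_{2-}$; its reduced matrix is the pair of $n'\times n'$ submatrices of $\psi_+$ and $\psi_-$ formed by their first $n'$ rows and first $n'$ columns. *)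

theory Defs
  imports "Jordan_Normal_Form.Matrix" "HOL-Library.Extended_Nat" "HOL-Computational_Algebra.Primes"
begin

text \<open>Kronecker (tensor) product of matrices w.r.t. the standard product basis:
  basis vector e_i (x) f_j has index i * dim2 + j.\<close>
definition kron_mat :: "'a::semiring_0 mat \<Rightarrow> 'a mat \<Rightarrow> 'a mat" where
  "kron_mat A B = mat (dim_row A * dim_row B) (dim_col A * dim_col B)
     (\<lambda>(i,j). A $$ (i div dim_row B, j div dim_col B) * B $$ (i mod dim_row B, j mod dim_col B))"

definition grading :: "nat \<Rightarrow> 'a::ring_1 mat" where
  "grading n = four_block_mat (1\<^sub>m n) (0\<^sub>m n n) (0\<^sub>m n n) (- 1\<^sub>m n)"

definition compatible_boundary :: "nat \<Rightarrow> 'a::ring_1 mat \<Rightarrow> bool" where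
  "compatible_boundary n \<delta> \<longleftrightarrow> \<delta> \<in> carrier_mat (2*n) (2*n) \<and>
     \<delta> * \<delta> = 0\<^sub>m (2*n) (2*n) \<and> \<delta> * grading n + grading n * \<delta> = 0\<^sub>m (2*n) (2*n)"

definition delta_pm :: "nat \<Rightarrow> 'a mat \<Rightarrow> 'a mat" where
  "delta_pm n \<delta> = mat n n (\<lambda>(i,j). \<delta> $$ (i, n + j))"
definition delta_mp :: "nat \<Rightarrow> 'a mat \<Rightarrow> 'a mat" where
  "delta_mp n \<delta> = mat n n (\<lambda>(i,j). \<delta> $$ (n + i, j))"

definition mat_image :: "'a::semiring_0 mat \<Rightarrow> 'a vec set" where
  "mat_image M = {M *\<^sub>v x | x. x \<in> carrier_vec (dim_col M)}"

definition mat_kernel :: "'a::semiring_0 mat \<Rightarrow> 'a vec set" where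
  "mat_kernel M = {v \<in> carrier_vec (dim_col M). M *\<^sub>v v = 0\<^sub>v (dim_row M)}"

definition hweight :: "'a::zero vec \<Rightarrow> nat" where
  "hweight v = card {i. i < dim_vec v \<and> v $ i \<noteq> 0}"

text \<open>Distance of the CSS code with Z-stabilizers the columns of Hz (C_- -> C_+)
  and X-stabilizers the rows of Hx (C_+ -> C_-): minimum weight of a vector in
  (ker Hx - im Hz) \<union> (ker Hz^T - im Hx^T); infinity if there is none.\<close>
definition css_distance :: "'a::semiring_0 mat \<Rightarrow> 'a mat \<Rightarrow> enat" where
  "css_distance Hz Hx = (INF v \<in> (mat_kernel Hx - mat_image Hz) \<union>
        (mat_kernel (transpose_mat Hz) - mat_image (transpose_mat Hx)). enat (hweight v))"

definition css_dist_P :: "nat \<Rightarrow> 'a::semiring_0 mat \<Rightarrow> enat" where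
  "css_dist_P n \<delta> = css_distance (delta_pm n \<delta>) (delta_mp n \<delta>)"
definition css_dist_negP :: "nat \<Rightarrow> 'a::semiring_0 mat \<Rightarrow> enat" where
  "css_dist_negP n \<delta> = css_distance (delta_mp n \<delta>) (delta_pm n \<delta>)"

definition prod_boundary :: "nat \<Rightarrow> 'a::ring_1 mat \<Rightarrow> 'a mat \<Rightarrow> 'a mat" where
  "prod_boundary n \<delta>1 \<delta>2 = kron_mat \<delta>1 (1\<^sub>m (2*n)) + kron_mat (grading n) \<delta>2"

text \<open>An element h of C (index a * (2n) + b, a index of C_1, b of C_2) lies in
  C_+ = C_{1+}(x)C_{2+} (+) C_{1-}(x)C_{2-}.\<close>
definition in_Cplus :: "nat \<Rightarrow> 'a::zero vec \<Rightarrow> bool" where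
  "in_Cplus n h \<longleftrightarrow> h \<in> carrier_vec ((2*n) * (2*n)) \<and>
     (\<forall>a < 2*n. \<forall>b < 2*n. (a < n) \<noteq> (b < n) \<longrightarrow> h $ (a * (2*n) + b) = 0)"

definition psi_plus :: "nat \<Rightarrow> 'a vec \<Rightarrow> nat \<Rightarrow> nat \<Rightarrow> 'a" where
  "psi_plus n h j k = h $ (j * (2*n) + k)"
definition psi_minus :: "nat \<Rightarrow> 'a vec \<Rightarrow> nat \<Rightarrow> nat \<Rightarrow> 'a" where
  "psi_minus n h j k = h $ ((n + j) * (2*n) + (n + k))"

definition reduced_vanishes :: "nat \<Rightarrow> nat \<Rightarrow> 'a::zero vec \<Rightarrow> bool" where
  "reduced_vanishes n n' h \<longleftrightarrow>
     (\<forall>j < n'. \<forall>k < n'. psi_plus n h j k = 0 \<and> psi_minus n h j k = 0)"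

end

theory Submission
  imports Defs "HOL-Number_Theory.Residues"
begin

text \<open>
  Over a field, if every cycle of a square-zero operator \<open>d\<close> that is supported on a set \<open>R\<close> of
  coordinates is a boundary, then there is a \<open>\<sigma>\<close> such that \<open>d\<sigma> + \<sigma>d\<close> fixes every vector
  supported on \<open>R\<close>.

  Let \<open>R\<close> be the set of coordinates outside the reduced block. A cycle of \<open>\<delta>\<^sub>i\<close> supported on \<open>R\<close>
  splits into its \<open>C\<^sub>+\<close> and \<open>C\<^sub>-\<close> parts, each of weight at most \<open>n - n'\<close> and hence a boundary by
  the distance bound. This gives \<open>\<sigma>\<^sub>1\<close> and \<open>\<sigma>\<^sub>2\<close>, and \<open>\<sigma>\<^sub>1\<close> may be taken to anticommute with
  \<open>P\<close> since \<open>2 \<noteq> 0\<close>. An element \<open>h\<close> with vanishing reduced matrix has \<open>h(a,b) = 0\<close> unless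
  \<open>a \<in> R\<close> or \<open>b \<in> R\<close>. If \<open>\<partial>h = 0\<close>, then \<open>h' = h - \<partial>(\<sigma>\<^sub>1 \<otimes> 1)h = h - ((\<delta>\<^sub>1\<sigma>\<^sub>1 + \<sigma>\<^sub>1\<delta>\<^sub>1) \<otimes> 1)h\<close>
  is a cycle with \<open>h'(a,b) = 0\<close> for \<open>b \<notin> R\<close>, so \<open>h' = (1 \<otimes> (\<delta>\<^sub>2\<sigma>\<^sub>2 + \<sigma>\<^sub>2\<delta>\<^sub>2))h' = \<partial>(P \<otimes> \<sigma>\<^sub>2)h'\<close>.
  Finally, \<open>\<partial>\<^sup>T\<close> is the product boundary of \<open>\<delta>\<^sub>1\<^sup>T\<close> and \<open>\<delta>\<^sub>2\<^sup>T\<close>, which are again compatible with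
  \<open>P\<close> and have the same code distances.
\<close>

section \<open>Matrices as functions on an index range\<close>

text \<open>An \<open>N \<times> N\<close> matrix is a function \<open>nat \<Rightarrow> nat \<Rightarrow> 'a\<close> of which only the entries below \<open>N\<close>
  matter; unlike for \<open>'a mat\<close>, the algebra then needs no carrier side conditions.\<close>

definition vdot :: "nat \<Rightarrow> (nat \<Rightarrow> 'a::comm_ring_1) \<Rightarrow> (nat \<Rightarrow> 'a) \<Rightarrow> 'a" where
  "vdot N u v = (\<Sum>k<N. u k * v k)"

definition mvmul :: "nat \<Rightarrow> (nat \<Rightarrow> nat \<Rightarrow> 'a::comm_ring_1) \<Rightarrow> (nat \<Rightarrow> 'a) \<Rightarrow> nat \<Rightarrow> 'a" where
  "mvmul N A v i = vdot N (A i) v"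

definition mmul :: "nat \<Rightarrow> (nat \<Rightarrow> nat \<Rightarrow> 'a::comm_ring_1) \<Rightarrow> (nat \<Rightarrow> nat \<Rightarrow> 'a) \<Rightarrow> nat \<Rightarrow> nat \<Rightarrow> 'a" where
  "mmul N A B i j = mvmul N A (\<lambda>k. B k j) i"

lemma vdot_add_right: "vdot N u (\<lambda>k. v k + w k) = vdot N u v + vdot N u w"
  unfolding vdot_def by (simp add: distrib_left sum.distrib)

lemma vdot_diff_right: "vdot N u (\<lambda>k. v k - w k) = vdot N u v - vdot N u w"
  unfolding vdot_def by (simp add: right_diff_distrib sum_subtractf)

lemma vdot_scale_right: "vdot N u (\<lambda>k. c * v k) = c * vdot N u v"
  unfolding vdot_def by (simp add: sum_distrib_left mult.left_commute)

lemma vdot_add_left: "vdot N (\<lambda>k. u k + v k) w = vdot N u w + vdot N v w"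
  unfolding vdot_def by (simp add: distrib_right sum.distrib)

lemma vdot_diff_left: "vdot N (\<lambda>k. u k - v k) w = vdot N u w - vdot N v w"
  unfolding vdot_def by (simp add: left_diff_distrib sum_subtractf)

lemma vdot_scale_left: "vdot N (\<lambda>k. c * u k) w = c * vdot N u w"
  unfolding vdot_def by (simp add: sum_distrib_left mult.assoc)

lemma vdot_sum_right: "vdot N u (\<lambda>k. \<Sum>t\<in>T. c t * G t k) = (\<Sum>t\<in>T. c t * vdot N u (G t))"
  unfolding vdot_def by (simp add: sum_distrib_left mult.left_commute sum.swap[of _ T])

lemma vdot_cong: "(\<And>k. k < N \<Longrightarrow> u k = u' k) \<Longrightarrow> (\<And>k. k < N \<Longrightarrow> v k = v' k)
    \<Longrightarrow> vdot N u v = vdot N u' v'"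
  unfolding vdot_def by (rule sum.cong) auto

lemma vdot_unit_right: "j < N \<Longrightarrow> vdot N u (\<lambda>k. if k = j then 1 else 0) = u j"
  unfolding vdot_def by (simp add: if_distrib[of "(*) _"] cong: if_cong)

lemma vdot_unit_left: "j < N \<Longrightarrow> vdot N (\<lambda>k. if j = k then 1 else 0) v = v j"
  unfolding vdot_def by (simp add: if_distrib[of "\<lambda>x. x * _"] cong: if_cong)

lemma vdot_zero_right: "(\<And>k. k < N \<Longrightarrow> v k = 0) \<Longrightarrow> vdot N u v = 0"
  unfolding vdot_def by simp

lemma vdot_zero_left: "(\<And>k. k < N \<Longrightarrow> u k = 0) \<Longrightarrow> vdot N u v = 0"
  unfolding vdot_def by simp

lemma mvmul_cong: "(\<And>k. k < N \<Longrightarrow> v k = v' k) \<Longrightarrow> mvmul N A v i = mvmul N A v' i"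
  unfolding mvmul_def by (rule vdot_cong) auto

lemma mvmul_sum: "mvmul N A (\<lambda>k. \<Sum>t\<in>T. c t * G t k) i = (\<Sum>t\<in>T. c t * mvmul N A (G t) i)"
  unfolding mvmul_def by (rule vdot_sum_right)

lemma mvmul_add: "mvmul N A (\<lambda>k. u k + v k) i = mvmul N A u i + mvmul N A v i"
  unfolding mvmul_def by (rule vdot_add_right)

lemma mvmul_diff: "mvmul N A (\<lambda>k. u k - v k) i = mvmul N A u i - mvmul N A v i"
  unfolding mvmul_def by (rule vdot_diff_right)

lemma mvmul_scale: "mvmul N A (\<lambda>k. c * u k) i = c * mvmul N A u i"
  unfolding mvmul_def by (rule vdot_scale_right)

lemma mvmul_add_matrix: "mvmul N (\<lambda>i j. A i j + B i j) v i = mvmul N A v i + mvmul N B v i"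
  unfolding mvmul_def by (rule vdot_add_left)

lemma mvmul_swap:
  "mvmul N B (\<lambda>b'. mvmul M A (\<lambda>a'. F a' b') a) b = mvmul M A (\<lambda>a'. mvmul N B (F a') b) a"
  unfolding mvmul_def vdot_def
  by (simp add: sum_distrib_left mult.left_commute sum.swap[of _ "{..<N}"])

lemma mvmul_mvmul: "mvmul N A (mvmul N B v) i = mvmul N (mmul N A B) v i"
proof -
  have "mvmul N A (mvmul N B v) i = (\<Sum>k<N. \<Sum>l<N. A i k * B k l * v l)"
    unfolding mvmul_def vdot_def by (simp add: sum_distrib_left mult.assoc)
  also have "\<dots> = (\<Sum>l<N. \<Sum>k<N. A i k * B k l * v l)"
    by (rule sum.swap)
  finally show ?thesis
    unfolding mmul_def mvmul_def vdot_def by (simp add: sum_distrib_right)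
qed

lemma mmul_assoc: "mmul N (mmul N A B) C = mmul N A (mmul N B C)"
  by (simp add: fun_eq_iff mmul_def mvmul_mvmul)

lemma mmul_add_left: "mmul N (\<lambda>i j. A i j + B i j) C i j = mmul N A C i j + mmul N B C i j"
  unfolding mmul_def mvmul_def by (rule vdot_add_left)

lemma mmul_add_right: "mmul N A (\<lambda>i j. B i j + C i j) i j = mmul N A B i j + mmul N A C i j"
  unfolding mmul_def mvmul_def by (rule vdot_add_right)

lemma mmul_diff_left: "mmul N (\<lambda>i j. A i j - B i j) C i j = mmul N A C i j - mmul N B C i j"
  unfolding mmul_def mvmul_def by (rule vdot_diff_left)

lemma mmul_diff_right: "mmul N A (\<lambda>i j. B i j - C i j) i j = mmul N A B i j - mmul N A C i j"
  unfolding mmul_def mvmul_def by (rule vdot_diff_right)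

lemma mmul_one_left: "i < N \<Longrightarrow> mmul N (\<lambda>i j. if i = j then 1 else 0) B i j = B i j"
  unfolding mmul_def mvmul_def by (rule vdot_unit_left)

lemma mmul_one_right: "j < N \<Longrightarrow> mmul N A (\<lambda>i j. if i = j then 1 else 0) i j = A i j"
  unfolding mmul_def mvmul_def by (rule vdot_unit_right)

lemma mmul_zero_left: "(\<And>k. k < N \<Longrightarrow> A i k = 0) \<Longrightarrow> mmul N A B i j = 0"
  unfolding mmul_def mvmul_def by (rule vdot_zero_left)

lemma mmul_zero_right: "(\<And>k. k < N \<Longrightarrow> B k j = 0) \<Longrightarrow> mmul N A B i j = 0"
  unfolding mmul_def mvmul_def by (rule vdot_zero_right)

lemma sum_lessThan_add: "(\<Sum>j<m + k. f j) = (\<Sum>j<m. f j) + (\<Sum>j<k. f (m + j :: nat))"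
  by (induction k) (auto simp: add.assoc)

section \<open>Generalized inverses\<close>

definition in_span :: "nat \<Rightarrow> ('b \<Rightarrow> nat \<Rightarrow> 'a::comm_ring_1) \<Rightarrow> 'b set \<Rightarrow> (nat \<Rightarrow> 'a) \<Rightarrow> bool" where
  "in_span N G T y \<longleftrightarrow> (\<exists>c. \<forall>i<N. y i = (\<Sum>t\<in>T. c t * G t i))"

lemma in_span_insert:
  assumes "finite T" "s \<notin> T" and "in_span N G T (\<lambda>i. y i - a * G s i)"
  shows "in_span N G (insert s T) y"
proof -
  obtain c where c: "\<forall>i<N. y i - a * G s i = (\<Sum>t\<in>T. c t * G t i)"
    using assms(3) by (auto simp: in_span_def)
  have "(\<Sum>t\<in>T. (c(s := a)) t * G t i) = (\<Sum>t\<in>T. c t * G t i)" for i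
    using assms(2) by (intro sum.cong) auto
  then have "y i = (\<Sum>t\<in>insert s T. (c(s := a)) t * G t i)" if "i < N" for i
    using assms(1,2) by (simp add: c[rule_format, OF that, symmetric])
  then show ?thesis unfolding in_span_def by blast
qed

lemma exists_functional_one:
  fixes y :: "nat \<Rightarrow> 'a::field"
  assumes "j < N" "y j \<noteq> 0"
  shows "\<exists>\<phi>. vdot N \<phi> y = 1"
proof
  show "vdot N (\<lambda>k. if k = j then inverse (y j) else 0) y = 1"
    using assms unfolding vdot_def by (simp add: if_distrib[of "\<lambda>x. x * _"] cong: if_cong)
qed

lemma separating_functional_insert:
  assumes \<psi>: "\<forall>t\<in>T. vdot N \<psi> (G t) = 0" "vdot N \<psi> (G s) = 1"
    and \<phi>: "\<forall>t\<in>T. vdot N \<phi> (G t) = 0" "vdot N \<phi> (\<lambda>i. y i - vdot N \<psi> y * G s i) = 1"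
  shows "\<exists>\<chi>. (\<forall>t\<in>insert s T. vdot N \<chi> (G t) = 0) \<and> vdot N \<chi> y = 1"
proof -
  define \<chi> where "\<chi> = (\<lambda>i. \<phi> i - vdot N \<phi> (G s) * \<psi> i)"
  have \<chi>: "vdot N \<chi> v = vdot N \<phi> v - vdot N \<phi> (G s) * vdot N \<psi> v" for v
    unfolding \<chi>_def by (simp add: vdot_diff_left vdot_scale_left)
  have "\<forall>t\<in>insert s T. vdot N \<chi> (G t) = 0"
    using \<phi>(1) \<psi> by (simp add: \<chi>)
  moreover have "vdot N \<chi> y = 1"
    using \<phi>(2) unfolding \<chi> vdot_diff_right vdot_scale_right by (simp add: mult.commute)
  ultimately show ?thesis by blast
qed

lemma span_or_separating_functional:
  fixes G :: "'b \<Rightarrow> nat \<Rightarrow> 'a::field"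
  assumes "finite T"
  shows "in_span N G T y \<or> (\<exists>\<phi>. (\<forall>t\<in>T. vdot N \<phi> (G t) = 0) \<and> vdot N \<phi> y = 1)"
  using assms
proof (induction T arbitrary: y rule: finite_induct)
  case empty
  then show ?case
    using exists_functional_one[of _ N y] by (cases "\<forall>i<N. y i = 0") (auto simp: in_span_def)
next
  case (insert s T)
  note span_insert = in_span_insert[OF insert.hyps]
  from insert.IH[of "G s"] show ?case
  proof (elim disjE exE conjE)
    assume "in_span N G T (G s)"
    then obtain c where c: "\<forall>i<N. G s i = (\<Sum>t\<in>T. c t * G t i)" by (auto simp: in_span_def)
    from insert.IH[of y] show ?thesis
    proof (elim disjE exE conjE)
      assume "in_span N G T y"
      then have "in_span N G (insert s T) y" using span_insert[where a=0] by simp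
      then show ?thesis ..
    next
      fix \<phi> assume \<phi>: "\<forall>t\<in>T. vdot N \<phi> (G t) = 0" "vdot N \<phi> y = 1"
      have "vdot N \<phi> (G s) = vdot N \<phi> (\<lambda>i. \<Sum>t\<in>T. c t * G t i)"
        using c by (intro vdot_cong) auto
      then have "vdot N \<phi> (G s) = 0" using \<phi>(1) by (simp add: vdot_sum_right)
      then show ?thesis using \<phi> by auto
    qed
  next
    fix \<psi> assume \<psi>: "\<forall>t\<in>T. vdot N \<psi> (G t) = 0" "vdot N \<psi> (G s) = 1"
    from insert.IH[of "\<lambda>i. y i - vdot N \<psi> y * G s i"] show ?thesis
      using span_insert separating_functional_insert[OF \<psi>] by blast
  qed
qed

definition generalized_inverse :: "nat \<Rightarrow> (nat \<Rightarrow> nat \<Rightarrow> 'a::comm_ring_1) \<Rightarrow> (nat \<Rightarrow> nat \<Rightarrow> 'a) \<Rightarrow> bool" where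
  "generalized_inverse N A \<sigma> \<longleftrightarrow> (\<forall>i<N. \<forall>j<N. mmul N A (mmul N \<sigma> A) i j = A i j)"

lemma exists_generalized_inverse:
  fixes A :: "nat \<Rightarrow> nat \<Rightarrow> 'a::field"
  shows "\<exists>\<sigma>. generalized_inverse N A \<sigma>"
proof -
  have "\<exists>\<sigma>. \<forall>j<k. \<forall>i<N. mvmul N A (mvmul N \<sigma> (\<lambda>l. A l j)) i = A i j" if "k \<le> N" for k
    using that
  proof (induction k)
    case (Suc k)
    then obtain \<sigma> where \<sigma>: "\<forall>j<k. \<forall>i<N. mvmul N A (mvmul N \<sigma> (\<lambda>l. A l j)) i = A i j"
      by auto
    have k: "k < N" using Suc.prems by simp
    from span_or_separating_functional[where N=N and G="\<lambda>t l. A l t" and T="{..<k}" and y="\<lambda>l. A l k", OF finite_lessThan] show ?case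
    proof (elim disjE exE conjE)
      assume "in_span N (\<lambda>t l. A l t) {..<k} (\<lambda>l. A l k)"
      then obtain c where c: "\<forall>i<N. A i k = (\<Sum>t<k. c t * A i t)" by (auto simp: in_span_def)
      have "mvmul N \<sigma> (\<lambda>l. A l k) = (\<lambda>a. \<Sum>t<k. c t * mvmul N \<sigma> (\<lambda>l. A l t) a)"
        using c by (intro ext, subst mvmul_sum[symmetric]) (rule mvmul_cong, simp)
      then have "mvmul N A (mvmul N \<sigma> (\<lambda>l. A l k)) i = (\<Sum>t<k. c t * A i t)" if "i < N" for i
        using \<sigma> that by (simp add: mvmul_sum)
      then show ?thesis using \<sigma> c less_Suc_eq by auto
    next
      fix \<phi> assume \<phi>: "\<forall>t\<in>{..<k}. vdot N \<phi> (\<lambda>l. A l t) = 0" "vdot N \<phi> (\<lambda>l. A l k) = 1"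
      define v where "v a = (if a = k then 1 else 0) - mvmul N \<sigma> (\<lambda>l. A l k) a" for a
      define \<sigma>' where "\<sigma>' a b = \<sigma> a b + v a * \<phi> b" for a b
      have \<sigma>': "mvmul N \<sigma>' u a = mvmul N \<sigma> u a + v a * vdot N \<phi> u" for u a
        unfolding mvmul_def \<sigma>'_def by (simp add: vdot_add_left vdot_scale_left)
      have old: "mvmul N \<sigma>' (\<lambda>l. A l j) = mvmul N \<sigma> (\<lambda>l. A l j)" if "j < k" for j
        using \<phi>(1) that by (simp add: \<sigma>' fun_eq_iff)
      have "mvmul N \<sigma>' (\<lambda>l. A l k) = (\<lambda>a. if a = k then 1 else 0)"
        using \<phi>(2) by (simp add: \<sigma>' v_def fun_eq_iff)
      then have "mvmul N A (mvmul N \<sigma>' (\<lambda>l. A l k)) i = A i k" for i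
        by (simp add: mvmul_def vdot_unit_right[OF k])
      then have "\<forall>j<Suc k. \<forall>i<N. mvmul N A (mvmul N \<sigma>' (\<lambda>l. A l j)) i = A i j"
        using \<sigma> old less_Suc_eq by auto
      then show ?thesis by blast
    qed
  qed simp
  then obtain \<sigma> where "\<forall>j<N. \<forall>i<N. mvmul N A (mvmul N \<sigma> (\<lambda>l. A l j)) i = A i j" by blast
  then show ?thesis by (auto simp: generalized_inverse_def mmul_def)
qed

section \<open>Homotopies on coordinate subspaces\<close>

definition square_zero :: "nat \<Rightarrow> (nat \<Rightarrow> nat \<Rightarrow> 'a::comm_ring_1) \<Rightarrow> bool" where
  "square_zero N d \<longleftrightarrow> (\<forall>i<N. \<forall>j<N. mmul N d d i j = 0)"

definition supported_cycles_exact :: "nat \<Rightarrow> (nat \<Rightarrow> nat \<Rightarrow> 'a::comm_ring_1) \<Rightarrow> nat set \<Rightarrow> bool" where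
  "supported_cycles_exact N d R \<longleftrightarrow>
     (\<forall>v. (\<forall>i<N. mvmul N d v i = 0) \<longrightarrow> (\<forall>i<N. i \<notin> R \<longrightarrow> v i = 0)
        \<longrightarrow> (\<exists>w. \<forall>i<N. v i = mvmul N d w i))"

definition homotopy_on :: "nat \<Rightarrow> (nat \<Rightarrow> nat \<Rightarrow> 'a::comm_ring_1) \<Rightarrow> (nat \<Rightarrow> nat \<Rightarrow> 'a) \<Rightarrow> nat set \<Rightarrow> bool" where
  "homotopy_on N d \<sigma> R \<longleftrightarrow>
     (\<forall>r\<in>R. r < N \<longrightarrow> (\<forall>i<N. mmul N d \<sigma> i r + mmul N \<sigma> d i r = (if i = r then 1 else 0)))"

definition harmonic_projection ::
    "nat \<Rightarrow> (nat \<Rightarrow> nat \<Rightarrow> 'a::comm_ring_1) \<Rightarrow> (nat \<Rightarrow> nat \<Rightarrow> 'a) \<Rightarrow> nat \<Rightarrow> nat \<Rightarrow> 'a" where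
  "harmonic_projection N d \<sigma> = (\<lambda>i j. (if i = j then 1 else 0) - mmul N d \<sigma> i j - mmul N \<sigma> d i j)"

definition restrict_columns :: "nat set \<Rightarrow> (nat \<Rightarrow> nat \<Rightarrow> 'a::zero) \<Rightarrow> nat \<Rightarrow> nat \<Rightarrow> 'a" where
  "restrict_columns R A = (\<lambda>i j. if j \<in> R then A i j else 0)"

context
  fixes N :: nat and d \<sigma> :: "nat \<Rightarrow> nat \<Rightarrow> 'a::comm_ring_1"
  assumes sq: "square_zero N d" and inv: "generalized_inverse N d \<sigma>"
begin

lemma harmonic_projection_mmul_left: "i < N \<Longrightarrow> j < N \<Longrightarrow> mmul N (harmonic_projection N d \<sigma>) d i j = 0"
proof -
  assume ij: "i < N" "j < N"
  have "mmul N \<sigma> (mmul N d d) i j = 0"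
    by (rule mmul_zero_right) (use sq ij in \<open>simp add: square_zero_def\<close>)
  then show ?thesis
    using inv ij
    by (simp add: generalized_inverse_def harmonic_projection_def mmul_diff_left mmul_one_left mmul_assoc)
qed

lemma harmonic_projection_mmul_right: "i < N \<Longrightarrow> j < N \<Longrightarrow> mmul N d (harmonic_projection N d \<sigma>) i j = 0"
proof -
  assume ij: "i < N" "j < N"
  have "mmul N (mmul N d d) \<sigma> i j = 0"
    by (rule mmul_zero_left) (use sq ij in \<open>simp add: square_zero_def\<close>)
  then show ?thesis
    using inv ij
    by (simp add: generalized_inverse_def harmonic_projection_def mmul_diff_right mmul_one_right mmul_assoc)
qed

text \<open>With \<open>\<pi>\<close> the harmonic projection, \<open>D\<^sub>R\<close> the coordinate projection onto \<open>R\<close> and \<open>A = dD\<^sub>R\<close>: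
  \<open>D\<^sub>R\<close> maps the kernel of \<open>A\<close> to cycles supported on \<open>R\<close>, i.e.\ to boundaries, which \<open>\<pi>\<close> kills.
  Hence \<open>\<pi>D\<^sub>R\<close> factors through \<open>A\<close> as \<open>\<pi>D\<^sub>R = \<pi>D\<^sub>RA\<^sub>gA\<close>.\<close>
lemma harmonic_projection_factors:
  assumes exact: "supported_cycles_exact N d R"
    and A\<^sub>g: "generalized_inverse N (restrict_columns R d) A\<^sub>g"
    and i: "i < N" and r: "r < N" "r \<in> R"
  shows "mmul N (restrict_columns R (harmonic_projection N d \<sigma>)) (mmul N A\<^sub>g (restrict_columns R d)) i r
       = harmonic_projection N d \<sigma> i r"
proof -
  let ?\<pi> = "harmonic_projection N d \<sigma>" and ?A = "restrict_columns R d"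
  define y where "y = (\<lambda>l. if l \<in> R then mmul N A\<^sub>g ?A l r - (if l = r then 1 else 0) else 0)"
  have "mvmul N d y j = 0" if "j < N" for j
  proof -
    have "mvmul N d y j = mvmul N ?A (\<lambda>l. mmul N A\<^sub>g ?A l r - (if l = r then 1 else 0)) j"
      unfolding mvmul_def vdot_def y_def restrict_columns_def by (rule sum.cong) auto
    also have "\<dots> = mmul N ?A (mmul N A\<^sub>g ?A) j r - ?A j r"
      using r by (simp add: mmul_def mvmul_def vdot_diff_right vdot_unit_right)
    finally show ?thesis using A\<^sub>g that r by (simp add: generalized_inverse_def)
  qed
  moreover have "\<forall>l<N. l \<notin> R \<longrightarrow> y l = 0" by (simp add: y_def)
  ultimately obtain w where w: "\<forall>l<N. y l = mvmul N d w l"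
    using exact unfolding supported_cycles_exact_def by blast
  have "mvmul N ?\<pi> y i = mvmul N ?\<pi> (mvmul N d w) i"
    using w by (intro mvmul_cong) simp
  also have "\<dots> = mvmul N (mmul N ?\<pi> d) w i"
    by (rule mvmul_mvmul)
  also have "\<dots> = 0"
    using harmonic_projection_mmul_left i by (simp add: mvmul_def vdot_zero_left)
  finally have "mvmul N ?\<pi> y i = 0" .
  moreover have "mvmul N ?\<pi> y i = mvmul N (restrict_columns R ?\<pi>) (\<lambda>l. mmul N A\<^sub>g ?A l r - (if l = r then 1 else 0)) i"
    unfolding mvmul_def vdot_def y_def restrict_columns_def by (rule sum.cong) auto
  moreover have "\<dots> = mmul N (restrict_columns R ?\<pi>) (mmul N A\<^sub>g ?A) i r - ?\<pi> i r"
    using r by (simp add: mmul_def mvmul_def vdot_diff_right vdot_unit_right restrict_columns_def)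
  ultimately show ?thesis by simp
qed

end

lemma exists_homotopy_on:
  fixes d :: "nat \<Rightarrow> nat \<Rightarrow> 'a::field"
  assumes sq: "square_zero N d" and exact: "supported_cycles_exact N d R"
  shows "\<exists>\<sigma>. homotopy_on N d \<sigma> R"
proof -
  obtain \<sigma>\<^sub>0 where \<sigma>\<^sub>0: "generalized_inverse N d \<sigma>\<^sub>0"
    using exists_generalized_inverse by blast
  let ?\<pi> = "harmonic_projection N d \<sigma>\<^sub>0" and ?A = "restrict_columns R d"
  obtain A\<^sub>g where A\<^sub>g: "generalized_inverse N ?A A\<^sub>g"
    using exists_generalized_inverse by blast
  define \<sigma> where "\<sigma> = (\<lambda>i j. \<sigma>\<^sub>0 i j + mmul N (restrict_columns R ?\<pi>) A\<^sub>g i j)"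
  have "mmul N d (restrict_columns R ?\<pi>) i k = 0" if "i < N" "k < N" for i k
    using harmonic_projection_mmul_right[OF sq \<sigma>\<^sub>0 that]
    by (cases "k \<in> R") (simp_all add: restrict_columns_def mmul_def mvmul_def vdot_def)
  then have d_\<sigma>: "mmul N d \<sigma> i r = mmul N d \<sigma>\<^sub>0 i r" if "i < N" for i r
    using that by (simp add: \<sigma>_def mmul_add_right mmul_assoc[symmetric] mmul_zero_left)
  have \<sigma>_d: "mmul N \<sigma> d i r = mmul N \<sigma>\<^sub>0 d i r + ?\<pi> i r" if "i < N" "r < N" "r \<in> R" for i r
  proof -
    have "mmul N A\<^sub>g ?A l r = mmul N A\<^sub>g d l r" for l
      using that(3) by (simp add: mmul_def restrict_columns_def)
    then have "mmul N (restrict_columns R ?\<pi>) (mmul N A\<^sub>g d) i r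
        = mmul N (restrict_columns R ?\<pi>) (mmul N A\<^sub>g ?A) i r"
      by (simp add: mmul_def[of N "restrict_columns R ?\<pi>"])
    then show ?thesis
      using harmonic_projection_factors[OF sq \<sigma>\<^sub>0 exact A\<^sub>g that]
      by (simp add: \<sigma>_def mmul_add_left mmul_assoc)
  qed
  have "homotopy_on N d \<sigma> R"
    using d_\<sigma> \<sigma>_d by (simp add: homotopy_on_def harmonic_projection_def)
  then show ?thesis by blast
qed

lemma homotopy_on_fixes_supported:
  assumes "homotopy_on N d \<sigma> R" and "\<forall>k<N. k \<notin> R \<longrightarrow> v k = 0" and "i < N"
  shows "mvmul N (\<lambda>i j. mmul N d \<sigma> i j + mmul N \<sigma> d i j) v i = v i"
proof -
  have "mvmul N (\<lambda>i j. mmul N d \<sigma> i j + mmul N \<sigma> d i j) v i = vdot N (\<lambda>k. if i = k then 1 else 0) v"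
    unfolding mvmul_def vdot_def by (rule sum.cong) (use assms in \<open>auto simp: homotopy_on_def\<close>)
  then show ?thesis using assms(3) by (simp add: vdot_unit_left)
qed

lemma square_zero_mvmul:
  assumes "square_zero N d" and "i < N"
  shows "mvmul N d (mvmul N d v) i = 0"
proof -
  have "vdot N (mmul N d d i) v = 0"
    using assms by (intro vdot_zero_left) (simp add: square_zero_def)
  then show ?thesis by (subst mvmul_mvmul) (simp add: mvmul_def)
qed

definition block_odd :: "nat \<Rightarrow> (nat \<Rightarrow> nat \<Rightarrow> 'a::zero) \<Rightarrow> bool" where
  "block_odd n d \<longleftrightarrow> (\<forall>i<2*n. \<forall>j<2*n. (i < n) = (j < n) \<longrightarrow> d i j = 0)"

definition odd_part :: "nat \<Rightarrow> (nat \<Rightarrow> nat \<Rightarrow> 'a::zero) \<Rightarrow> nat \<Rightarrow> nat \<Rightarrow> 'a" where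
  "odd_part n \<sigma> i j = (if (i < n) = (j < n) then 0 else \<sigma> i j)"

lemma block_odd_odd_part: "block_odd n (odd_part n \<sigma>)"
  by (simp add: block_odd_def odd_part_def)

lemma homotopy_on_odd_part:
  assumes odd: "block_odd n d" and hom: "homotopy_on (2*n) d \<sigma> R"
  shows "homotopy_on (2*n) d (odd_part n \<sigma>) R"
  unfolding homotopy_on_def
proof (intro ballI impI allI)
  fix r i assume r: "r \<in> R" "r < 2*n" and i: "i < 2*n"
  have "d i k * odd_part n \<sigma> k r = (if (i < n) = (r < n) then d i k * \<sigma> k r else 0)"
    if "k < 2*n" for k
    using odd i that unfolding block_odd_def odd_part_def by (cases "i < n"; cases "k < n") auto
  then have left: "mmul (2*n) d (odd_part n \<sigma>) i r
      = (if (i < n) = (r < n) then mmul (2*n) d \<sigma> i r else 0)"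
    unfolding mmul_def mvmul_def vdot_def by (cases "(i < n) = (r < n)") (auto intro!: sum.cong sum.neutral)
  have "odd_part n \<sigma> i k * d k r = (if (i < n) = (r < n) then \<sigma> i k * d k r else 0)"
    if "k < 2*n" for k
    using odd r that unfolding block_odd_def odd_part_def by (cases "r < n"; cases "k < n") auto
  then have right: "mmul (2*n) (odd_part n \<sigma>) d i r
      = (if (i < n) = (r < n) then mmul (2*n) \<sigma> d i r else 0)"
    unfolding mmul_def mvmul_def vdot_def by (cases "(i < n) = (r < n)") (auto intro!: sum.cong sum.neutral)
  show "mmul (2*n) d (odd_part n \<sigma>) i r + mmul (2*n) (odd_part n \<sigma>) d i r = (if i = r then 1 else 0)"
    using hom r i unfolding left right homotopy_on_def by auto
qed

lemma block_odd_mvmul_upper: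
  assumes "block_odd n d" and "i < n"
  shows "mvmul (2*n) d v i = mvmul n (\<lambda>i j. d i (n + j)) (\<lambda>j. v (n + j)) i"
proof -
  have "(\<Sum>j<n. d i j * v j) = 0" using assms by (simp add: block_odd_def)
  then show ?thesis
    unfolding mvmul_def vdot_def mult_2 sum_lessThan_add by simp
qed

lemma block_odd_mvmul_lower:
  assumes "block_odd n d" and "i < n"
  shows "mvmul (2*n) d v (n + i) = mvmul n (\<lambda>i j. d (n + i) j) v i"
proof -
  have "(\<Sum>j<n. d (n + i) (n + j) * v (n + j)) = 0" using assms by (simp add: block_odd_def)
  then show ?thesis
    unfolding mvmul_def vdot_def mult_2 sum_lessThan_add by simp
qed

section \<open>The tensor product boundary\<close>

definition grade_sign :: "nat \<Rightarrow> nat \<Rightarrow> 'a::ring_1" where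
  "grade_sign n a = (if a < n then 1 else -1)"

lemma grade_sign_square [simp]:
  "grade_sign n a * grade_sign n a = 1" "grade_sign n a * (grade_sign n a * x) = x"
  by (simp_all add: grade_sign_def)

lemma block_odd_anticommutes:
  assumes "block_odd n d" and "a < 2*n"
  shows "mvmul (2*n) d (\<lambda>a'. grade_sign n a' * x a') a = - (grade_sign n a * mvmul (2*n) d x a)"
proof -
  have "d a k * (grade_sign n k * x k) = - (grade_sign n a * (d a k * x k))" if "k < 2*n" for k
    using assms that unfolding block_odd_def grade_sign_def by (cases "a < n"; cases "k < n") auto
  then show ?thesis
    unfolding mvmul_def vdot_def by (simp add: sum_distrib_left sum_negf[symmetric])
qed

text \<open>A function \<open>F\<close> stands for the element \<open>\<Sum> F a b \<cdot> e\<^sub>a \<otimes> e\<^sub>b\<close> of \<open>C\<^sub>1 \<otimes> C\<^sub>2\<close>; the operator is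
  \<open>\<delta>\<^sub>1 \<otimes> 1 + P \<otimes> \<delta>\<^sub>2\<close>.\<close>
definition tensor_boundary ::
    "nat \<Rightarrow> (nat \<Rightarrow> nat \<Rightarrow> 'a::comm_ring_1) \<Rightarrow> (nat \<Rightarrow> nat \<Rightarrow> 'a) \<Rightarrow> (nat \<Rightarrow> nat \<Rightarrow> 'a) \<Rightarrow> nat \<Rightarrow> nat \<Rightarrow> 'a"
  where "tensor_boundary n d\<^sub>1 d\<^sub>2 F =
    (\<lambda>a b. mvmul (2*n) d\<^sub>1 (\<lambda>a'. F a' b) a + grade_sign n a * mvmul (2*n) d\<^sub>2 (F a) b)"

lemma tensor_boundary_add:
  "tensor_boundary n d\<^sub>1 d\<^sub>2 (\<lambda>a b. F a b + G a b) a b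
     = tensor_boundary n d\<^sub>1 d\<^sub>2 F a b + tensor_boundary n d\<^sub>1 d\<^sub>2 G a b"
  by (simp add: tensor_boundary_def mvmul_add algebra_simps)

lemma tensor_boundary_diff:
  "tensor_boundary n d\<^sub>1 d\<^sub>2 (\<lambda>a b. F a b - G a b) a b
     = tensor_boundary n d\<^sub>1 d\<^sub>2 F a b - tensor_boundary n d\<^sub>1 d\<^sub>2 G a b"
  by (simp add: tensor_boundary_def mvmul_diff algebra_simps)

lemma tensor_boundary_cong:
  assumes "\<And>a' b'. a' < 2*n \<Longrightarrow> b' < 2*n \<Longrightarrow> F a' b' = G a' b'" and "a < 2*n" "b < 2*n"
  shows "tensor_boundary n d\<^sub>1 d\<^sub>2 F a b = tensor_boundary n d\<^sub>1 d\<^sub>2 G a b"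
  using assms by (simp add: tensor_boundary_def cong: mvmul_cong)

lemma tensor_boundary_square_zero:
  assumes "square_zero (2*n) d\<^sub>1" "square_zero (2*n) d\<^sub>2" "block_odd n d\<^sub>1" and "a < 2*n" "b < 2*n"
  shows "tensor_boundary n d\<^sub>1 d\<^sub>2 (tensor_boundary n d\<^sub>1 d\<^sub>2 F) a b = 0"
proof -
  define X where "X a' = mvmul (2*n) d\<^sub>2 (F a') b" for a'
  have "tensor_boundary n d\<^sub>1 d\<^sub>2 (tensor_boundary n d\<^sub>1 d\<^sub>2 F) a b
      = mvmul (2*n) d\<^sub>1 (mvmul (2*n) d\<^sub>1 (\<lambda>a'. F a' b)) a
        + mvmul (2*n) d\<^sub>1 (\<lambda>a'. grade_sign n a' * X a') a
        + grade_sign n a * mvmul (2*n) d\<^sub>2 (\<lambda>b'. mvmul (2*n) d\<^sub>1 (\<lambda>a'. F a' b') a) b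
        + grade_sign n a * grade_sign n a * mvmul (2*n) d\<^sub>2 (mvmul (2*n) d\<^sub>2 (F a)) b"
    by (simp add: tensor_boundary_def X_def mvmul_add mvmul_scale algebra_simps)
  also have "\<dots> = 0"
  proof -
    have "mvmul (2*n) d\<^sub>2 (\<lambda>b'. mvmul (2*n) d\<^sub>1 (\<lambda>a'. F a' b') a) b = mvmul (2*n) d\<^sub>1 X a"
      unfolding X_def by (rule mvmul_swap)
    then show ?thesis
      using assms by (simp add: square_zero_mvmul block_odd_anticommutes)
  qed
  finally show ?thesis .
qed

lemma tensor_boundary_homotopy_left:
  assumes "block_odd n \<sigma>" and "a < 2*n"
  shows "tensor_boundary n d\<^sub>1 d\<^sub>2 (\<lambda>a b. mvmul (2*n) \<sigma> (\<lambda>a'. F a' b) a) a b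
           + mvmul (2*n) \<sigma> (\<lambda>a'. tensor_boundary n d\<^sub>1 d\<^sub>2 F a' b) a
         = mvmul (2*n) (\<lambda>i j. mmul (2*n) d\<^sub>1 \<sigma> i j + mmul (2*n) \<sigma> d\<^sub>1 i j) (\<lambda>a'. F a' b) a"
proof -
  define X where "X a' = mvmul (2*n) d\<^sub>2 (F a') b" for a'
  have swap: "mvmul (2*n) d\<^sub>2 (\<lambda>b'. mvmul (2*n) \<sigma> (\<lambda>a'. F a' b') a) b = mvmul (2*n) \<sigma> X a"
    unfolding X_def by (rule mvmul_swap)
  have "tensor_boundary n d\<^sub>1 d\<^sub>2 (\<lambda>a b. mvmul (2*n) \<sigma> (\<lambda>a'. F a' b) a) a b
          + mvmul (2*n) \<sigma> (\<lambda>a'. tensor_boundary n d\<^sub>1 d\<^sub>2 F a' b) a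
      = mvmul (2*n) d\<^sub>1 (mvmul (2*n) \<sigma> (\<lambda>a'. F a' b)) a
        + mvmul (2*n) \<sigma> (mvmul (2*n) d\<^sub>1 (\<lambda>a'. F a' b)) a
        + (grade_sign n a * mvmul (2*n) \<sigma> X a + mvmul (2*n) \<sigma> (\<lambda>a'. grade_sign n a' * X a') a)"
    by (simp add: tensor_boundary_def swap mvmul_add) (simp add: X_def algebra_simps)
  also have "\<dots> = mvmul (2*n) (\<lambda>i j. mmul (2*n) d\<^sub>1 \<sigma> i j + mmul (2*n) \<sigma> d\<^sub>1 i j) (\<lambda>a'. F a' b) a"
    using assms by (simp add: block_odd_anticommutes mvmul_add_matrix mvmul_mvmul)
  finally show ?thesis .
qed

lemma tensor_boundary_homotopy_right:
  assumes "block_odd n d\<^sub>1" and "a < 2*n"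
  shows "tensor_boundary n d\<^sub>1 d\<^sub>2 (\<lambda>a b. grade_sign n a * mvmul (2*n) \<sigma> (F a) b) a b
           + grade_sign n a * mvmul (2*n) \<sigma> (tensor_boundary n d\<^sub>1 d\<^sub>2 F a) b
         = mvmul (2*n) (\<lambda>i j. mmul (2*n) d\<^sub>2 \<sigma> i j + mmul (2*n) \<sigma> d\<^sub>2 i j) (F a) b"
proof -
  define Y where "Y a' = mvmul (2*n) \<sigma> (F a') b" for a'
  have swap: "mvmul (2*n) \<sigma> (\<lambda>b'. mvmul (2*n) d\<^sub>1 (\<lambda>a'. F a' b') a) b = mvmul (2*n) d\<^sub>1 Y a"
    unfolding Y_def by (rule mvmul_swap)
  have "tensor_boundary n d\<^sub>1 d\<^sub>2 (\<lambda>a b. grade_sign n a * mvmul (2*n) \<sigma> (F a) b) a b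
          + grade_sign n a * mvmul (2*n) \<sigma> (tensor_boundary n d\<^sub>1 d\<^sub>2 F a) b
      = (mvmul (2*n) d\<^sub>1 (\<lambda>a'. grade_sign n a' * Y a') a + grade_sign n a * mvmul (2*n) d\<^sub>1 Y a)
        + grade_sign n a * (grade_sign n a * (mvmul (2*n) d\<^sub>2 (mvmul (2*n) \<sigma> (F a)) b
                                           + mvmul (2*n) \<sigma> (mvmul (2*n) d\<^sub>2 (F a)) b))"
    by (simp add: tensor_boundary_def swap mvmul_add mvmul_scale) (simp add: Y_def algebra_simps)
  also have "\<dots> = mvmul (2*n) (\<lambda>i j. mmul (2*n) d\<^sub>2 \<sigma> i j + mmul (2*n) \<sigma> d\<^sub>2 i j) (F a) b"
    using assms by (simp add: block_odd_anticommutes mvmul_add_matrix mvmul_mvmul)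
  finally show ?thesis .
qed

lemma tensor_cycle_is_boundary:
  assumes sq: "square_zero (2*n) d\<^sub>1" "square_zero (2*n) d\<^sub>2"
    and odd: "block_odd n d\<^sub>1" "block_odd n \<sigma>\<^sub>1"
    and hom: "homotopy_on (2*n) d\<^sub>1 \<sigma>\<^sub>1 R" "homotopy_on (2*n) d\<^sub>2 \<sigma>\<^sub>2 R"
    and cycle: "\<forall>a<2*n. \<forall>b<2*n. tensor_boundary n d\<^sub>1 d\<^sub>2 H a b = 0"
    and supp: "\<forall>a<2*n. \<forall>b<2*n. a \<notin> R \<longrightarrow> b \<notin> R \<longrightarrow> H a b = 0"
  shows "\<exists>G. \<forall>a<2*n. \<forall>b<2*n. H a b = tensor_boundary n d\<^sub>1 d\<^sub>2 G a b"
proof -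
  define S\<^sub>1 where "S\<^sub>1 = (\<lambda>a b. mvmul (2*n) \<sigma>\<^sub>1 (\<lambda>a'. H a' b) a)"
  define H' where "H' = (\<lambda>a b. H a b - tensor_boundary n d\<^sub>1 d\<^sub>2 S\<^sub>1 a b)"
  define S\<^sub>2 where "S\<^sub>2 = (\<lambda>a b. grade_sign n a * mvmul (2*n) \<sigma>\<^sub>2 (H' a) b)"
  have H'_supp: "H' a b = 0" if ab: "a < 2*n" "b < 2*n" "b \<notin> R" for a b
  proof -
    have "mvmul (2*n) \<sigma>\<^sub>1 (\<lambda>a'. tensor_boundary n d\<^sub>1 d\<^sub>2 H a' b) a = 0"
      using cycle ab unfolding mvmul_def by (intro vdot_zero_right) simp
    moreover have "mvmul (2*n) (\<lambda>i j. mmul (2*n) d\<^sub>1 \<sigma>\<^sub>1 i j + mmul (2*n) \<sigma>\<^sub>1 d\<^sub>1 i j) (\<lambda>a'. H a' b) a = H a b"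
      using supp ab by (intro homotopy_on_fixes_supported[OF hom(1)]) auto
    ultimately show ?thesis
      using tensor_boundary_homotopy_left[OF odd(2) ab(1), of d\<^sub>1 d\<^sub>2 H b]
      by (simp add: H'_def S\<^sub>1_def)
  qed
  have H'_cycle: "tensor_boundary n d\<^sub>1 d\<^sub>2 H' a b = 0" if "a < 2*n" "b < 2*n" for a b
    using cycle tensor_boundary_square_zero[OF sq odd(1) that] that
    by (simp add: H'_def tensor_boundary_diff)
  have S\<^sub>2: "tensor_boundary n d\<^sub>1 d\<^sub>2 S\<^sub>2 a b = H' a b" if ab: "a < 2*n" "b < 2*n" for a b
  proof -
    have "mvmul (2*n) \<sigma>\<^sub>2 (tensor_boundary n d\<^sub>1 d\<^sub>2 H' a) b = 0"
      using H'_cycle ab unfolding mvmul_def by (intro vdot_zero_right) simp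
    moreover have "mvmul (2*n) (\<lambda>i j. mmul (2*n) d\<^sub>2 \<sigma>\<^sub>2 i j + mmul (2*n) \<sigma>\<^sub>2 d\<^sub>2 i j) (H' a) b = H' a b"
      using H'_supp ab by (intro homotopy_on_fixes_supported[OF hom(2)]) auto
    ultimately show ?thesis
      using tensor_boundary_homotopy_right[OF odd(1) ab(1), of d\<^sub>2 \<sigma>\<^sub>2 H' b]
      by (simp add: S\<^sub>2_def)
  qed
  have "H a b = tensor_boundary n d\<^sub>1 d\<^sub>2 (\<lambda>a b. S\<^sub>1 a b + S\<^sub>2 a b) a b"
    if "a < 2*n" "b < 2*n" for a b
    using S\<^sub>2[OF that] by (simp add: tensor_boundary_add H'_def)
  then show ?thesis by blast
qed

section \<open>Boundary operators compatible with the grading\<close>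

lemma two_neq_zero_of_odd_card:
  assumes "odd (card (UNIV :: 'a::{ring_1, finite} set))"
  shows "(2::'a) \<noteq> 0"
proof
  assume "(2::'a) = 0"
  then have "CHAR('a) dvd 2" using of_nat_eq_0_iff_char_dvd[of 2, where 'a='a] by simp
  moreover have "CHAR('a) \<noteq> 0"
    using \<open>CHAR('a) dvd 2\<close> by (metis dvd_0_left_iff zero_neq_numeral)
  moreover have "CHAR('a) \<noteq> 1" by simp
  ultimately have "CHAR('a) = 2"
    using dvd_imp_le[of "CHAR('a)" 2] by linarith
  then show False using CHAR_dvd_CARD[where 'a='a] assms by simp
qed

definition entries :: "'a mat \<Rightarrow> nat \<Rightarrow> nat \<Rightarrow> 'a" where
  "entries A i j = A $$ (i, j)"

lemma entries_mult:
  assumes "A \<in> carrier_mat N K" "B \<in> carrier_mat K M" "i < N" "j < M"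
  shows "entries (A * B) i j = mmul K (entries A) (entries B) i j"
  using assms by (simp add: entries_def mmul_def mvmul_def vdot_def scalar_prod_def atLeast0LessThan)

lemma mult_mat_vec_entries:
  assumes "A \<in> carrier_mat N K" "v \<in> carrier_vec K" "i < N"
  shows "(A *\<^sub>v v) $ i = mvmul K (entries A) (\<lambda>k. v $ k) i"
  using assms by (simp add: entries_def mvmul_def vdot_def scalar_prod_def atLeast0LessThan)

lemma grading_carrier: "grading n \<in> carrier_mat (2*n) (2*n)"
  unfolding grading_def by (auto simp: mult_2)

lemma grading_entry:
  "i < 2*n \<Longrightarrow> j < 2*n \<Longrightarrow> grading n $$ (i, j) = (if i = j then grade_sign n i else 0)"
  unfolding grading_def grade_sign_def by (auto simp: mult_2)

lemma transpose_grading: "transpose_mat (grading n :: 'a::ring_1 mat) = grading n"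
proof -
  have "dim_row (grading n :: 'a mat) = 2*n" "dim_col (grading n :: 'a mat) = 2*n"
    using grading_carrier by auto
  then show ?thesis by (auto simp: grading_entry intro!: eq_matI)
qed

lemma compatible_boundary_square_zero:
  assumes "compatible_boundary n \<delta>"
  shows "square_zero (2*n) (entries \<delta>)"
  using assms unfolding compatible_boundary_def square_zero_def
  by (auto simp flip: entries_mult simp: entries_def)

lemma mult_grading_entry:
  fixes \<delta> :: "'a::comm_ring_1 mat"
  assumes "\<delta> \<in> carrier_mat (2*n) (2*n)" "i < 2*n" "j < 2*n"
  shows "(\<delta> * grading n) $$ (i, j) = \<delta> $$ (i, j) * grade_sign n j"
proof -
  have "(\<delta> * grading n) $$ (i, j) = vdot (2*n) (entries \<delta> i) (\<lambda>k. entries (grading n) k j)"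
    using entries_mult[OF assms(1) grading_carrier assms(2,3)]
    by (simp add: mmul_def mvmul_def entries_def[of "_ * _"])
  also have "\<dots> = vdot (2*n) (entries \<delta> i) (\<lambda>k. grade_sign n j * (if k = j then 1 else 0))"
    using assms by (intro vdot_cong) (simp_all add: entries_def grading_entry)
  finally show ?thesis
    using assms by (simp add: vdot_scale_right vdot_unit_right entries_def)
qed

lemma grading_mult_entry:
  fixes \<delta> :: "'a::comm_ring_1 mat"
  assumes "\<delta> \<in> carrier_mat (2*n) (2*n)" "i < 2*n" "j < 2*n"
  shows "(grading n * \<delta>) $$ (i, j) = grade_sign n i * \<delta> $$ (i, j)"
proof -
  have "(grading n * \<delta>) $$ (i, j) = vdot (2*n) (entries (grading n) i) (\<lambda>k. entries \<delta> k j)"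
    using entries_mult[OF grading_carrier assms(1) assms(2,3)]
    by (simp add: mmul_def mvmul_def entries_def[of "_ * _"])
  also have "\<dots> = vdot (2*n) (\<lambda>k. grade_sign n i * (if i = k then 1 else 0)) (\<lambda>k. entries \<delta> k j)"
    using assms by (intro vdot_cong) (simp_all add: entries_def grading_entry)
  finally show ?thesis
    using assms by (simp add: vdot_scale_left vdot_unit_left entries_def)
qed

lemma compatible_boundary_block_odd:
  assumes two: "(2::'a::idom) \<noteq> 0" and compat: "compatible_boundary n (\<delta> :: 'a mat)"
  shows "block_odd n (entries \<delta>)"
  unfolding block_odd_def
proof (intro allI impI)
  fix i j assume ij: "i < 2*n" "j < 2*n" "(i < n) = (j < n)"
  have \<delta>: "\<delta> \<in> carrier_mat (2*n) (2*n)" using compat by (simp add: compatible_boundary_def)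
  have "(\<delta> * grading n + grading n * \<delta>) $$ (i, j) = 0"
    using compat ij by (simp add: compatible_boundary_def)
  then have "\<delta> $$ (i, j) * grade_sign n j + grade_sign n i * \<delta> $$ (i, j) = 0"
    using \<delta> grading_carrier[of n, where 'a='a] ij by (simp add: mult_grading_entry grading_mult_entry del: index_mult_mat(1))
  then have "2 * (grade_sign n i * \<delta> $$ (i, j)) = 0"
    using ij(3) by (simp add: grade_sign_def split: if_splits)
  then show "entries \<delta> i j = 0"
    using two by (simp add: entries_def grade_sign_def split: if_splits)
qed

lemma compatible_boundary_transpose:
  fixes \<delta> :: "'a::comm_ring_1 mat"
  assumes "compatible_boundary n \<delta>"
  shows "compatible_boundary n (transpose_mat \<delta>)"
proof -
  have \<delta>: "\<delta> \<in> carrier_mat (2*n) (2*n)" and sq: "\<delta> * \<delta> = 0\<^sub>m (2*n) (2*n)"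
    and ac: "\<delta> * grading n + grading n * \<delta> = 0\<^sub>m (2*n) (2*n)"
    using assms by (auto simp: compatible_boundary_def)
  note P = grading_carrier[of n, where 'a='a]
  have "transpose_mat \<delta> * transpose_mat \<delta> = transpose_mat (\<delta> * \<delta>)"
    using \<delta> by (simp add: transpose_mult)
  moreover have "transpose_mat (grading n * \<delta> + \<delta> * grading n)
      = transpose_mat (grading n * \<delta>) + transpose_mat (\<delta> * grading n)"
    using \<delta> P by (intro transpose_add mult_carrier_mat)
  moreover have "transpose_mat (grading n * \<delta>) + transpose_mat (\<delta> * grading n)
      = transpose_mat \<delta> * grading n + grading n * transpose_mat \<delta>"
    using \<delta> P by (simp add: transpose_mult transpose_grading)
  moreover have "grading n * \<delta> + \<delta> * grading n = \<delta> * grading n + grading n * \<delta>"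
    using \<delta> P by (intro comm_add_mat) auto
  ultimately show ?thesis
    using \<delta> sq ac by (simp add: compatible_boundary_def)
qed

section \<open>Code distance\<close>

lemma css_distance_transpose: "css_distance (transpose_mat Hx) (transpose_mat Hz) = css_distance Hz Hx"
  unfolding css_distance_def by (simp add: Un_commute)

lemma delta_pm_transpose:
  "\<delta> \<in> carrier_mat (2*n) (2*n) \<Longrightarrow> delta_pm n (transpose_mat \<delta>) = transpose_mat (delta_mp n \<delta>)"
  by (rule eq_matI) (auto simp: delta_pm_def delta_mp_def)

lemma delta_mp_transpose:
  "\<delta> \<in> carrier_mat (2*n) (2*n) \<Longrightarrow> delta_mp n (transpose_mat \<delta>) = transpose_mat (delta_pm n \<delta>)"
  by (rule eq_matI) (auto simp: delta_pm_def delta_mp_def)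

lemma css_dist_P_transpose:
  "\<delta> \<in> carrier_mat (2*n) (2*n) \<Longrightarrow> css_dist_P n (transpose_mat \<delta>) = css_dist_P n \<delta>"
  by (simp add: css_dist_P_def delta_pm_transpose delta_mp_transpose css_distance_transpose)

lemma css_dist_negP_transpose:
  "\<delta> \<in> carrier_mat (2*n) (2*n) \<Longrightarrow> css_dist_negP n (transpose_mat \<delta>) = css_dist_negP n \<delta>"
  by (simp add: css_dist_negP_def delta_pm_transpose delta_mp_transpose css_distance_transpose)

lemma css_distance_kernel_in_image:
  assumes "enat w < css_distance Hz Hx" and "v \<in> mat_kernel Hx" and "hweight v \<le> w"
  shows "v \<in> mat_image Hz"
proof (rule ccontr)
  assume "v \<notin> mat_image Hz"
  then have "css_distance Hz Hx \<le> enat (hweight v)"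
    unfolding css_distance_def using assms(2) by (intro INF_lower) auto
  then show False
    using assms(1,3) by (metis enat_ord_simps(1) leD order_trans)
qed

lemma vec_in_mat_kernel:
  assumes "M \<in> carrier_mat m n" and "\<forall>i<m. mvmul n (entries M) u i = 0"
  shows "vec n u \<in> mat_kernel M"
proof -
  have "(M *\<^sub>v vec n u) $ i = 0" if "i < m" for i
  proof -
    have "(M *\<^sub>v vec n u) $ i = mvmul n (entries M) (\<lambda>k. vec n u $ k) i"
      using assms(1) that by (intro mult_mat_vec_entries) auto
    also have "\<dots> = mvmul n (entries M) u i"
      by (rule mvmul_cong) simp
    finally show ?thesis using assms(2) that by simp
  qed
  then show ?thesis
    using assms(1) unfolding mat_kernel_def by (auto intro!: eq_vecI)
qed

lemma vec_in_mat_image: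
  assumes "M \<in> carrier_mat m n" and "vec m u \<in> mat_image M"
  shows "\<exists>x. \<forall>i<m. u i = mvmul n (entries M) x i"
proof -
  obtain x where x: "x \<in> carrier_vec n" "vec m u = M *\<^sub>v x"
    using assms unfolding mat_image_def by auto
  have "u i = mvmul n (entries M) (\<lambda>k. x $ k) i" if "i < m" for i
  proof -
    have "u i = (M *\<^sub>v x) $ i" using x(2) that by (metis index_vec)
    then show ?thesis using assms(1) x(1) that by (simp only: mult_mat_vec_entries)
  qed
  then show ?thesis by blast
qed

lemma hweight_vec_le:
  assumes "\<forall>i<n'. u i = 0"
  shows "hweight (vec n u) \<le> n - n'"
proof -
  have "{i. i < dim_vec (vec n u) \<and> vec n u $ i \<noteq> 0} \<subseteq> {n'..<n}"
    using assms by (auto simp: not_less[symmetric])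
  then show ?thesis
    unfolding hweight_def by (metis card_atLeastLessThan card_mono finite_atLeastLessThan)
qed

lemma low_weight_kernel_in_image:
  fixes Hz Hx :: "'a::comm_ring_1 mat"
  assumes "enat (n - n') < css_distance Hz Hx" and "Hz \<in> carrier_mat n n" "Hx \<in> carrier_mat n n"
    and "\<forall>i<n'. u i = 0" and "\<forall>i<n. mvmul n (entries Hx) u i = 0"
  shows "\<exists>x. \<forall>i<n. u i = mvmul n (entries Hz) x i"
proof -
  have "vec n u \<in> mat_kernel Hx" using assms(3,5) by (rule vec_in_mat_kernel)
  moreover have "hweight (vec n u) \<le> n - n'" using assms(4) by (rule hweight_vec_le)
  ultimately have "vec n u \<in> mat_image Hz" using assms(1) by (intro css_distance_kernel_in_image)
  then show ?thesis using assms(2) by (intro vec_in_mat_image)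
qed

lemma mvmul_delta_pm:
  "i < n \<Longrightarrow> mvmul n (entries (delta_pm n \<delta>)) u i = mvmul n (\<lambda>i j. entries \<delta> i (n + j)) u i"
  unfolding mvmul_def by (rule vdot_cong) (simp_all add: entries_def delta_pm_def)

lemma mvmul_delta_mp:
  "i < n \<Longrightarrow> mvmul n (entries (delta_mp n \<delta>)) u i = mvmul n (\<lambda>i j. entries \<delta> (n + i) j) u i"
  unfolding mvmul_def by (rule vdot_cong) (simp_all add: entries_def delta_mp_def)

definition outside_reduced :: "nat \<Rightarrow> nat \<Rightarrow> nat set" where
  "outside_reduced n n' = {i. n' \<le> i \<and> i < n \<or> n + n' \<le> i}"

lemma supported_cycles_exact_of_blocks:
  assumes odd: "block_odd n d" and "n' \<le> n"
    and plus: "\<And>u. \<forall>i<n'. u i = 0 \<Longrightarrow> \<forall>i<n. mvmul n (\<lambda>i j. d (n + i) j) u i = 0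
                 \<Longrightarrow> \<exists>x. \<forall>i<n. u i = mvmul n (\<lambda>i j. d i (n + j)) x i"
    and minus: "\<And>u. \<forall>i<n'. u i = 0 \<Longrightarrow> \<forall>i<n. mvmul n (\<lambda>i j. d i (n + j)) u i = 0
                 \<Longrightarrow> \<exists>x. \<forall>i<n. u i = mvmul n (\<lambda>i j. d (n + i) j) x i"
  shows "supported_cycles_exact (2*n) d (outside_reduced n n')"
  unfolding supported_cycles_exact_def
proof (intro allI impI)
  fix v assume cycle: "\<forall>i<2*n. mvmul (2*n) d v i = 0"
    and supp: "\<forall>i<2*n. i \<notin> outside_reduced n n' \<longrightarrow> v i = 0"
  have "mvmul n (\<lambda>i j. d (n + i) j) v i = 0" if "i < n" for i
    using cycle[rule_format, of "n + i"] block_odd_mvmul_lower[OF odd that, of v] that by simp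
  moreover have "\<forall>i<n'. v i = 0"
    using supp \<open>n' \<le> n\<close> by (simp add: outside_reduced_def)
  ultimately obtain x\<^sub>p where x\<^sub>p: "\<forall>i<n. v i = mvmul n (\<lambda>i j. d i (n + j)) x\<^sub>p i"
    using plus[of v] by auto
  have "mvmul n (\<lambda>i j. d i (n + j)) (\<lambda>j. v (n + j)) i = 0" if "i < n" for i
    using cycle[rule_format, of i] block_odd_mvmul_upper[OF odd that, of v] that by simp
  moreover have "\<forall>i<n'. v (n + i) = 0"
    using supp \<open>n' \<le> n\<close> by (simp add: outside_reduced_def)
  ultimately obtain x\<^sub>m where x\<^sub>m: "\<forall>i<n. v (n + i) = mvmul n (\<lambda>i j. d (n + i) j) x\<^sub>m i"
    using minus[of "\<lambda>j. v (n + j)"] by auto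
  define w where "w j = (if j < n then x\<^sub>m j else x\<^sub>p (j - n))" for j
  have "v i = mvmul (2*n) d w i" if "i < 2*n" for i
  proof (cases "i < n")
    case True
    have "mvmul n (\<lambda>i j. d i (n + j)) (\<lambda>j. w (n + j)) i = mvmul n (\<lambda>i j. d i (n + j)) x\<^sub>p i"
      by (rule mvmul_cong) (simp add: w_def)
    then show ?thesis
      using x\<^sub>p odd True by (simp add: block_odd_mvmul_upper)
  next
    case False
    define i' where "i' = i - n"
    have i': "i = n + i'" "i' < n" using False that by (simp_all add: i'_def)
    have "mvmul n (\<lambda>i j. d (n + i) j) w i' = mvmul n (\<lambda>i j. d (n + i) j) x\<^sub>m i'"
      by (rule mvmul_cong) (simp add: w_def)
    then show ?thesis
      using x\<^sub>m odd i' by (simp add: block_odd_mvmul_lower)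
  qed
  then show "\<exists>w. \<forall>i<2*n. v i = mvmul (2*n) d w i" by blast
qed

lemma supported_cycles_exact_of_distance:
  fixes \<delta> :: "'a::comm_ring_1 mat"
  assumes "n' \<le> n" and odd: "block_odd n (entries \<delta>)"
    and P: "enat (n - n') < css_dist_P n \<delta>" and negP: "enat (n - n') < css_dist_negP n \<delta>"
  shows "supported_cycles_exact (2*n) (entries \<delta>) (outside_reduced n n')"
proof (rule supported_cycles_exact_of_blocks[OF odd \<open>n' \<le> n\<close>])
  have pm: "delta_pm n \<delta> \<in> carrier_mat n n" and mp: "delta_mp n \<delta> \<in> carrier_mat n n"
    by (simp_all add: delta_pm_def delta_mp_def)
  fix u :: "nat \<Rightarrow> 'a" assume "\<forall>i<n'. u i = 0"
  then show "\<forall>i<n. mvmul n (\<lambda>i j. entries \<delta> (n + i) j) u i = 0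
      \<Longrightarrow> \<exists>x. \<forall>i<n. u i = mvmul n (\<lambda>i j. entries \<delta> i (n + j)) x i"
    and "\<forall>i<n. mvmul n (\<lambda>i j. entries \<delta> i (n + j)) u i = 0
      \<Longrightarrow> \<exists>x. \<forall>i<n. u i = mvmul n (\<lambda>i j. entries \<delta> (n + i) j) x i"
    using low_weight_kernel_in_image[OF P[unfolded css_dist_P_def] pm mp]
      low_weight_kernel_in_image[OF negP[unfolded css_dist_negP_def] mp pm]
    by (simp_all add: mvmul_delta_pm mvmul_delta_mp)
qed

section \<open>The product boundary operator\<close>

lemma index_pair_less:
  assumes "a < m" "b < N"
  shows "a * N + b < m * (N::nat)"
proof -
  have "a * N + b < Suc a * N" using assms(2) by simp
  also have "\<dots> \<le> m * N" using assms(1) by (intro mult_le_mono1) simp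
  finally show ?thesis .
qed

lemma sum_lessThan_mult: "(\<Sum>j<N * M. f j) = (\<Sum>a<N. \<Sum>b<M. f (a * M + b :: nat))"
proof (induction N)
  case (Suc N)
  have "(\<Sum>j<Suc N * M. f j) = (\<Sum>j<N * M + M. f j)" by (simp add: add.commute)
  also have "\<dots> = (\<Sum>j<N * M. f j) + (\<Sum>b<M. f (N * M + b))" by (rule sum_lessThan_add)
  finally show ?case using Suc by simp
qed simp

lemma kron_mat_carrier:
  "A \<in> carrier_mat a b \<Longrightarrow> B \<in> carrier_mat c d \<Longrightarrow> kron_mat A B \<in> carrier_mat (a * c) (b * d)"
  unfolding kron_mat_def carrier_mat_def by simp

lemma transpose_kron_mat: "transpose_mat (kron_mat A B) = kron_mat (transpose_mat A) (transpose_mat B)"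
proof (rule eq_matI)
  fix i j assume "i < dim_row (kron_mat (transpose_mat A) (transpose_mat B))"
    and "j < dim_col (kron_mat (transpose_mat A) (transpose_mat B))"
  then have i: "i < dim_col A * dim_col B" and j: "j < dim_row A * dim_row B"
    by (simp_all add: kron_mat_def)
  then have "0 < dim_col B" "0 < dim_row B" by (auto intro: gr0I)
  then have bounds: "i div dim_col B < dim_col A" "i mod dim_col B < dim_col B"
      "j div dim_row B < dim_row A" "j mod dim_row B < dim_row B"
    using i j by (simp_all add: less_mult_imp_div_less)
  have "transpose_mat (kron_mat A B) $$ (i, j)
      = A $$ (j div dim_row B, i div dim_col B) * B $$ (j mod dim_row B, i mod dim_col B)"
    using i j by (simp add: kron_mat_def)
  also have "\<dots> = kron_mat (transpose_mat A) (transpose_mat B) $$ (i, j)"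
    using i j bounds by (simp add: kron_mat_def)
  finally show "transpose_mat (kron_mat A B) $$ (i, j) = kron_mat (transpose_mat A) (transpose_mat B) $$ (i, j)" .
qed (simp_all add: kron_mat_def)

lemma prod_boundary_carrier:
  assumes "\<delta>\<^sub>1 \<in> carrier_mat (2*n) (2*n)" "\<delta>\<^sub>2 \<in> carrier_mat (2*n) (2*n)"
  shows "prod_boundary n \<delta>\<^sub>1 \<delta>\<^sub>2 \<in> carrier_mat (2*n*(2*n)) (2*n*(2*n))"
  using kron_mat_carrier[OF assms(1) one_carrier_mat[of "2*n"]]
    kron_mat_carrier[OF grading_carrier[of n] assms(2)]
  by (simp add: prod_boundary_def)

lemma transpose_prod_boundary:
  fixes \<delta>\<^sub>1 \<delta>\<^sub>2 :: "'a::comm_ring_1 mat"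
  assumes "\<delta>\<^sub>1 \<in> carrier_mat (2*n) (2*n)" "\<delta>\<^sub>2 \<in> carrier_mat (2*n) (2*n)"
  shows "transpose_mat (prod_boundary n \<delta>\<^sub>1 \<delta>\<^sub>2) = prod_boundary n (transpose_mat \<delta>\<^sub>1) (transpose_mat \<delta>\<^sub>2)"
proof -
  have "kron_mat \<delta>\<^sub>1 (1\<^sub>m (2*n)) \<in> carrier_mat (2*n*(2*n)) (2*n*(2*n))"
    by (rule kron_mat_carrier[OF assms(1) one_carrier_mat])
  moreover have "kron_mat (grading n) \<delta>\<^sub>2 \<in> carrier_mat (2*n*(2*n)) (2*n*(2*n))"
    by (rule kron_mat_carrier[OF grading_carrier assms(2)])
  ultimately show ?thesis
    by (simp add: prod_boundary_def transpose_add transpose_kron_mat transpose_grading)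
qed

lemma prod_boundary_entry:
  fixes \<delta>\<^sub>1 \<delta>\<^sub>2 :: "'a::comm_ring_1 mat"
  assumes "\<delta>\<^sub>1 \<in> carrier_mat (2*n) (2*n)" "\<delta>\<^sub>2 \<in> carrier_mat (2*n) (2*n)"
    and "a < 2*n" "b < 2*n" "a' < 2*n" "b' < 2*n"
  shows "prod_boundary n \<delta>\<^sub>1 \<delta>\<^sub>2 $$ (a*(2*n) + b, a'*(2*n) + b')
    = (if b' = b then entries \<delta>\<^sub>1 a a' else 0) + (if a' = a then grade_sign n a * entries \<delta>\<^sub>2 b b' else 0)"
proof -
  have "a*(2*n) + b < 2*n*(2*n)" "a'*(2*n) + b' < 2*n*(2*n)"
    using assms by (simp_all only: index_pair_less)
  then show ?thesis
    using assms grading_carrier[of n, where 'a='a]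
    by (simp add: prod_boundary_def kron_mat_def grading_entry entries_def)
qed

lemma prod_boundary_mult_vec:
  fixes \<delta>\<^sub>1 \<delta>\<^sub>2 :: "'a::comm_ring_1 mat"
  assumes \<delta>: "\<delta>\<^sub>1 \<in> carrier_mat (2*n) (2*n)" "\<delta>\<^sub>2 \<in> carrier_mat (2*n) (2*n)"
    and x: "x \<in> carrier_vec (2*n*(2*n))" and ab: "a < 2*n" "b < 2*n"
  shows "(prod_boundary n \<delta>\<^sub>1 \<delta>\<^sub>2 *\<^sub>v x) $ (a*(2*n) + b)
    = tensor_boundary n (entries \<delta>\<^sub>1) (entries \<delta>\<^sub>2) (\<lambda>a b. x $ (a*(2*n) + b)) a b"
proof -
  let ?N = "2*n" and ?E = "prod_boundary n \<delta>\<^sub>1 \<delta>\<^sub>2"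
  define X where "X a b = x $ (a*?N + b)" for a b
  have "(?E *\<^sub>v x) $ (a*?N + b) = mvmul (?N*?N) (entries ?E) (\<lambda>k. x $ k) (a*?N + b)"
    using prod_boundary_carrier[OF \<delta>] x index_pair_less[OF ab] by (rule mult_mat_vec_entries)
  also have "\<dots> = (\<Sum>a'<?N. \<Sum>b'<?N. ?E $$ (a*?N + b, a'*?N + b') * X a' b')"
    unfolding mvmul_def vdot_def entries_def X_def by (rule sum_lessThan_mult)
  also have "\<dots> = (\<Sum>a'<?N. \<Sum>b'<?N. (if b' = b then entries \<delta>\<^sub>1 a a' * X a' b' else 0)
                       + (if a' = a then grade_sign n a * (entries \<delta>\<^sub>2 b b' * X a' b') else 0))"
    using \<delta> ab by (intro sum.cong refl) (simp add: prod_boundary_entry distrib_right)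
  also have "\<dots> = (\<Sum>a'<?N. entries \<delta>\<^sub>1 a a' * X a' b)
      + grade_sign n a * (\<Sum>b'<?N. entries \<delta>\<^sub>2 b b' * X a b')"
  proof -
    have "(\<Sum>a'<?N. \<Sum>b'<?N. if a' = a then grade_sign n a * (entries \<delta>\<^sub>2 b b' * X a' b') else 0)
        = grade_sign n a * (\<Sum>b'<?N. entries \<delta>\<^sub>2 b b' * X a b')"
      using ab by (subst sum.swap) (simp add: sum_distrib_left)
    then show ?thesis using ab by (simp add: sum.distrib)
  qed
  also have "\<dots> = tensor_boundary n (entries \<delta>\<^sub>1) (entries \<delta>\<^sub>2) X a b"
    using ab by (simp add: tensor_boundary_def mvmul_def vdot_def)
  finally show ?thesis unfolding X_def .
qed

lemma mat_image_prod_boundaryI: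
  fixes \<delta>\<^sub>1 \<delta>\<^sub>2 :: "'a::comm_ring_1 mat"
  assumes \<delta>: "\<delta>\<^sub>1 \<in> carrier_mat (2*n) (2*n)" "\<delta>\<^sub>2 \<in> carrier_mat (2*n) (2*n)"
    and h: "h \<in> carrier_vec (2*n*(2*n))"
    and G: "\<forall>a<2*n. \<forall>b<2*n. h $ (a*(2*n) + b) = tensor_boundary n (entries \<delta>\<^sub>1) (entries \<delta>\<^sub>2) G a b"
  shows "h \<in> mat_image (prod_boundary n \<delta>\<^sub>1 \<delta>\<^sub>2)"
proof -
  let ?N = "2*n" and ?E = "prod_boundary n \<delta>\<^sub>1 \<delta>\<^sub>2"
  define x where "x = vec (?N*?N) (\<lambda>i. G (i div ?N) (i mod ?N))"
  have x: "x \<in> carrier_vec (?N*?N)" by (simp add: x_def)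
  have "h $ i = (?E *\<^sub>v x) $ i" if i: "i < ?N*?N" for i
  proof -
    define a b where "a = i div ?N" and "b = i mod ?N"
    have "0 < ?N" using i by (cases "n = 0") auto
    then have ab: "a < ?N" "b < ?N"
      using i by (simp_all add: a_def b_def less_mult_imp_div_less)
    have i_eq: "i = a*?N + b"
      unfolding a_def b_def by (rule div_mult_mod_eq[symmetric])
    have "(?E *\<^sub>v x) $ i = tensor_boundary n (entries \<delta>\<^sub>1) (entries \<delta>\<^sub>2) (\<lambda>a b. x $ (a*?N + b)) a b"
      unfolding i_eq by (rule prod_boundary_mult_vec[OF \<delta> x ab])
    also have "\<dots> = tensor_boundary n (entries \<delta>\<^sub>1) (entries \<delta>\<^sub>2) G a b"
    proof (rule tensor_boundary_cong[OF _ ab])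
      fix a' b' assume "a' < ?N" "b' < ?N"
      then show "x $ (a'*?N + b') = G a' b'"
        using index_pair_less[of a' ?N b' ?N] by (simp add: x_def)
    qed
    finally show ?thesis using G ab i_eq by simp
  qed
  then have "h = ?E *\<^sub>v x"
    using h prod_boundary_carrier[OF \<delta>] by (intro eq_vecI) auto
  then show ?thesis
    using x prod_boundary_carrier[OF \<delta>] unfolding mat_image_def by auto
qed

lemma reduced_vanishes_outside:
  assumes "in_Cplus n h" "reduced_vanishes n n' h" and "a < 2*n" "b < 2*n"
    and "a \<notin> outside_reduced n n'" "b \<notin> outside_reduced n n'"
  shows "h $ (a*(2*n) + b) = 0"
proof (cases "(a < n) = (b < n)")
  case True
  show ?thesis
  proof (cases "a < n")
    case True
    then show ?thesis
      using assms \<open>(a < n) = (b < n)\<close>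
      by (auto simp: outside_reduced_def reduced_vanishes_def psi_plus_def)
  next
    case False
    then have "a = n + (a - n)" "b = n + (b - n)" "a - n < n'" "b - n < n'"
      using assms \<open>(a < n) = (b < n)\<close> by (auto simp: outside_reduced_def)
    then show ?thesis
      using assms(2) unfolding reduced_vanishes_def psi_minus_def by metis
  qed
qed (use assms in \<open>auto simp: in_Cplus_def\<close>)

lemma prod_boundary_cycle_is_boundary:
  fixes \<delta>\<^sub>1 \<delta>\<^sub>2 :: "'a::field mat"
  assumes two: "(2::'a) \<noteq> 0" and "n' \<le> n"
    and compat: "compatible_boundary n \<delta>\<^sub>1" "compatible_boundary n \<delta>\<^sub>2"
    and dist: "enat (n - n') < css_dist_P n \<delta>\<^sub>1" "enat (n - n') < css_dist_negP n \<delta>\<^sub>1"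
      "enat (n - n') < css_dist_P n \<delta>\<^sub>2" "enat (n - n') < css_dist_negP n \<delta>\<^sub>2"
    and h: "in_Cplus n h" "h \<in> mat_kernel (prod_boundary n \<delta>\<^sub>1 \<delta>\<^sub>2)" "reduced_vanishes n n' h"
  shows "h \<in> mat_image (prod_boundary n \<delta>\<^sub>1 \<delta>\<^sub>2)"
proof -
  let ?R = "outside_reduced n n'"
  have \<delta>: "\<delta>\<^sub>1 \<in> carrier_mat (2*n) (2*n)" "\<delta>\<^sub>2 \<in> carrier_mat (2*n) (2*n)"
    using compat by (simp_all add: compatible_boundary_def)
  note sq = compat[THEN compatible_boundary_square_zero]
  note odd = compat[THEN compatible_boundary_block_odd[OF two]]
  note exact = supported_cycles_exact_of_distance[OF \<open>n' \<le> n\<close>]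
  obtain \<sigma>\<^sub>1 where \<sigma>\<^sub>1: "homotopy_on (2*n) (entries \<delta>\<^sub>1) \<sigma>\<^sub>1 ?R"
    using exists_homotopy_on[OF sq(1) exact[OF odd(1) dist(1,2)]] by blast
  obtain \<sigma>\<^sub>2 where \<sigma>\<^sub>2: "homotopy_on (2*n) (entries \<delta>\<^sub>2) \<sigma>\<^sub>2 ?R"
    using exists_homotopy_on[OF sq(2) exact[OF odd(2) dist(3,4)]] by blast
  have h_vec: "h \<in> carrier_vec (2*n*(2*n))" and h_ker: "prod_boundary n \<delta>\<^sub>1 \<delta>\<^sub>2 *\<^sub>v h = 0\<^sub>v (2*n*(2*n))"
    using h(2) prod_boundary_carrier[OF \<delta>] by (auto simp: mat_kernel_def)
  define H where "H a b = h $ (a*(2*n) + b)" for a b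
  have "tensor_boundary n (entries \<delta>\<^sub>1) (entries \<delta>\<^sub>2) H a b = 0" if "a < 2*n" "b < 2*n" for a b
    using prod_boundary_mult_vec[OF \<delta> h_vec that] h_ker index_pair_less[OF that]
    by (simp add: H_def[abs_def])
  moreover have "\<forall>a<2*n. \<forall>b<2*n. a \<notin> ?R \<longrightarrow> b \<notin> ?R \<longrightarrow> H a b = 0"
    using reduced_vanishes_outside[OF h(1,3)] by (simp add: H_def)
  ultimately obtain G
    where "\<forall>a<2*n. \<forall>b<2*n. H a b = tensor_boundary n (entries \<delta>\<^sub>1) (entries \<delta>\<^sub>2) G a b"
    using tensor_cycle_is_boundary[OF sq odd(1) block_odd_odd_part
        homotopy_on_odd_part[OF odd(1) \<sigma>\<^sub>1] \<sigma>\<^sub>2]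
    by blast
  then show ?thesis
    unfolding H_def by (rule mat_image_prod_boundaryI[OF \<delta> h_vec])
qed

theorem lemma4:
  fixes \<delta>1 \<delta>2 :: "'a::{field, finite} mat" and n n' :: nat
  assumes "prime (card (UNIV :: 'a set))" and "odd (card (UNIV :: 'a set))"
    and "compatible_boundary n \<delta>1" and "compatible_boundary n \<delta>2"
    and "n' \<le> n"
    and "enat (2 * (n - n') + 1) \<le> css_dist_P n \<delta>1"
    and "enat (2 * (n - n') + 1) \<le> css_dist_negP n \<delta>1"
    and "enat (2 * (n - n') + 1) \<le> css_dist_P n \<delta>2"
    and "enat (2 * (n - n') + 1) \<le> css_dist_negP n \<delta>2"
  shows "(\<forall>h. in_Cplus n h \<and> h \<in> mat_kernel (prod_boundary n \<delta>1 \<delta>2) \<and> reduced_vanishes n n' h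
            \<longrightarrow> h \<in> mat_image (prod_boundary n \<delta>1 \<delta>2))
       \<and> (\<forall>h. in_Cplus n h \<and> h \<in> mat_kernel (transpose_mat (prod_boundary n \<delta>1 \<delta>2))
              \<and> reduced_vanishes n n' h
            \<longrightarrow> h \<in> mat_image (transpose_mat (prod_boundary n \<delta>1 \<delta>2)))"
proof -
  have two: "(2::'a) \<noteq> 0" using assms(2) by (rule two_neq_zero_of_odd_card)
  have lt: "enat (n - n') < enat (2 * (n - n') + 1)" by simp
  have dist: "enat (n - n') < css_dist_P n \<delta>1" "enat (n - n') < css_dist_negP n \<delta>1"
    "enat (n - n') < css_dist_P n \<delta>2" "enat (n - n') < css_dist_negP n \<delta>2"
    using assms(6-9) by (blast intro: less_le_trans[OF lt])+
  have \<delta>: "\<delta>1 \<in> carrier_mat (2*n) (2*n)" "\<delta>2 \<in> carrier_mat (2*n) (2*n)"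
    using assms(3,4) by (simp_all add: compatible_boundary_def)
  note exact = prod_boundary_cycle_is_boundary[OF two \<open>n' \<le> n\<close>]
  show ?thesis
  proof (intro conjI allI impI; elim conjE)
    fix h assume "in_Cplus n h" "h \<in> mat_kernel (prod_boundary n \<delta>1 \<delta>2)" "reduced_vanishes n n' h"
    then show "h \<in> mat_image (prod_boundary n \<delta>1 \<delta>2)"
      using exact[OF assms(3,4) dist] by blast
  next
    fix h assume "in_Cplus n h" "h \<in> mat_kernel (transpose_mat (prod_boundary n \<delta>1 \<delta>2))"
      "reduced_vanishes n n' h"
    then show "h \<in> mat_image (transpose_mat (prod_boundary n \<delta>1 \<delta>2))"
      using exact[OF assms(3,4)[THEN compatible_boundary_transpose]] dist
      by (simp add: transpose_prod_boundary[OF \<delta>] css_dist_P_transpose css_dist_negP_transpose \<delta>)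
  qed
qed

end
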